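(* Let $G$ be a $P_5$-free graph. If $(a,b,c,d)$ is an induced path $P_4$ in $G$ (with edges $ab,bc,cd$), then neither $b$ nor $c$ belongs to any efficient dominating set of $G$.
   Context: All graphs are finite, undirected and simple. A vertex dominates itself and all its neighbors. A vertex set $D$ of $G$ is an efficient dominating set if every vertex of $G$ is dominated by exactly one vertex of $D$. $P_k$ denotes the chordless path on $k$ vertices; $P_5$-free means no induced subgraph isomorphic to $P_5$. *)

theory Defs
  imports Main
begin

definition graph :: "'a set \<Rightarrow> ('a \<Rightarrow> 'a \<Rightarrow> bool) \<Rightarrow> bool" where
  "graph V E \<longleftrightarrow> finite V \<and> (\<forall>x y. E x y \<longrightarrow> E y x) \<and> (\<forall>x. \<not> E x x)
     \<and> (\<forall>x y. E x y \<longrightarrow> x \<in> V \<and> y \<in> V)"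

definition dominates :: "('a \<Rightarrow> 'a \<Rightarrow> bool) \<Rightarrow> 'a \<Rightarrow> 'a \<Rightarrow> bool" where
  "dominates E d v \<longleftrightarrow> d = v \<or> E d v"

definition efficient_dominating_set ::
  "'a set \<Rightarrow> ('a \<Rightarrow> 'a \<Rightarrow> bool) \<Rightarrow> 'a set \<Rightarrow> bool" where
  "efficient_dominating_set V E D \<longleftrightarrow> D \<subseteq> V \<and>
     (\<forall>v\<in>V. \<exists>!d. d \<in> D \<and> dominates E d v)"

definition induced_path :: "'a set \<Rightarrow> ('a \<Rightarrow> 'a \<Rightarrow> bool) \<Rightarrow> 'a list \<Rightarrow> bool" where
  "induced_path V E ps \<longleftrightarrow> distinct ps \<and> set ps \<subseteq> V \<and>
     (\<forall>i<length ps. \<forall>j<length ps. E (ps ! i) (ps ! j) \<longleftrightarrow> (i = j + 1 \<or> j = i + 1))"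

definition P5_free :: "'a set \<Rightarrow> ('a \<Rightarrow> 'a \<Rightarrow> bool) \<Rightarrow> bool" where
  "P5_free V E \<longleftrightarrow> \<not> (\<exists>ps. length ps = 5 \<and> induced_path V E ps)"

end

theory Submission
  imports Defs
begin

text \<open>Suppose b lies in the efficient dominating set D. The vertex d is dominated by some
  x \<in> D, and x \<noteq> b since b and d are not adjacent. As b already dominates a, b and c,
  efficiency forbids x to dominate any of them; so x is a neighbour of d distinct from and
  non-adjacent to a, b, c, and a b c d x is an induced P5. The case c \<in> D is the same argument
  applied to the reversed path d c b a.\<close>

lemma induced_path_adjacent_iff:
  assumes "induced_path V E ps" "i < length ps" "j < length ps"
  shows "E (ps ! i) (ps ! j) \<longleftrightarrow> i = j + 1 \<or> j = i + 1"
  using assms unfolding induced_path_def by blast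

lemma induced_path_rev:
  assumes "induced_path V E ps"
  shows "induced_path V E (rev ps)"
  unfolding induced_path_def
proof (intro conjI allI impI)
  let ?n = "length ps"
  fix i j assume "i < length (rev ps)" "j < length (rev ps)"
  then have "i < ?n" "j < ?n" by simp_all
  then have "E (rev ps ! i) (rev ps ! j) \<longleftrightarrow> ?n - Suc i = ?n - Suc j + 1 \<or> ?n - Suc j = ?n - Suc i + 1"
    using induced_path_adjacent_iff[OF assms, of "?n - Suc i" "?n - Suc j"] by (simp add: rev_nth)
  also have "\<dots> \<longleftrightarrow> i = j + 1 \<or> j = i + 1"
    using \<open>i < ?n\<close> \<open>j < ?n\<close> by arith
  finally show "E (rev ps ! i) (rev ps ! j) \<longleftrightarrow> i = j + 1 \<or> j = i + 1" .
qed (use assms in \<open>auto simp: induced_path_def\<close>)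

lemma induced_path_snoc:
  assumes "graph V E" "induced_path V E ps" "ps \<noteq> []"
    and "x \<in> V" "x \<notin> set ps" "E (last ps) x" "\<forall>v\<in>set (butlast ps). \<not> E v x"
  shows "induced_path V E (ps @ [x])"
  unfolding induced_path_def
proof (intro conjI allI impI)
  let ?n = "length ps"
  have sym: "E u v \<longleftrightarrow> E v u" for u v
    using assms(1) unfolding graph_def by blast
  have irrefl: "\<not> E u u" for u
    using assms(1) unfolding graph_def by blast
  have to_x: "E (ps ! j) x \<longleftrightarrow> ?n = j + 1" if "j < ?n" for j
  proof (cases "?n = j + 1")
    case True
    then show ?thesis using assms(3,6) by (simp add: last_conv_nth)
  next
    case False
    with that have "j < length (butlast ps)" by simp
    then have "ps ! j \<in> set (butlast ps)" by (metis nth_butlast nth_mem)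
    with False show ?thesis using assms(7) by blast
  qed
  fix i j assume "i < length (ps @ [x])" "j < length (ps @ [x])"
  then consider "i < ?n" "j < ?n" | "i < ?n" "j = ?n" | "i = ?n" "j < ?n" | "i = ?n" "j = ?n"
    by fastforce
  then show "E ((ps @ [x]) ! i) ((ps @ [x]) ! j) \<longleftrightarrow> i = j + 1 \<or> j = i + 1"
  proof cases
    case 1
    then show ?thesis using induced_path_adjacent_iff[OF assms(2)] by (simp add: nth_append)
  next
    case 2
    then show ?thesis using to_x by (auto simp: nth_append)
  next
    case 3
    then show ?thesis using to_x sym by (auto simp: nth_append)
  next
    case 4
    then show ?thesis using irrefl by simp
  qed
qed (use assms in \<open>auto simp: induced_path_def\<close>)

lemma efficient_dominating_set_unique_dominator:
  assumes "efficient_dominating_set V E D" "v \<in> V"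
    and "x \<in> D" "dominates E x v" "y \<in> D" "dominates E y v"
  shows "x = y"
  using assms unfolding efficient_dominating_set_def by blast

lemma efficient_dominator_extends_P4:
  assumes G: "graph V E" and D: "efficient_dominating_set V E D"
    and P: "induced_path V E [a, b, c, d]" and "b \<in> D"
  obtains x where "induced_path V E [a, b, c, d, x]"
proof -
  have adj: "E ([a, b, c, d] ! i) ([a, b, c, d] ! j) \<longleftrightarrow> i = j + 1 \<or> j = i + 1"
    if "i < 4" "j < 4" for i j
    using induced_path_adjacent_iff[OF P] that by simp
  have V: "a \<in> V" "b \<in> V" "c \<in> V" "d \<in> V" and dist: "distinct [a, b, c, d]"
    using P unfolding induced_path_def by auto
  have sym: "E u v \<longleftrightarrow> E v u" for u v
    using G unfolding graph_def by blast
  obtain x where "x \<in> D" "dominates E x d"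
    using D V(4) unfolding efficient_dominating_set_def by blast
  have "x \<noteq> b"
    using \<open>dominates E x d\<close> dist adj[of 1 3] by (auto simp: dominates_def)
  have b_dominates: "dominates E b v" if "v \<in> {a, b, c}" for v
    using that adj[of 1 0] adj[of 1 2] by (auto simp: dominates_def)
  have x_not_dominates: "\<not> dominates E x v" if "v \<in> {a, b, c}" for v
    using efficient_dominating_set_unique_dominator[OF D _ \<open>x \<in> D\<close> _ \<open>b \<in> D\<close> b_dominates]
      that V \<open>x \<noteq> b\<close> by blast
  have "x \<noteq> d"
    using x_not_dominates[of c] adj[of 3 2] by (auto simp: dominates_def)
  then have "E d x"
    using \<open>dominates E x d\<close> sym by (simp add: dominates_def)
  have "x \<in> V"
    using D \<open>x \<in> D\<close> unfolding efficient_dominating_set_def by blast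
  have "induced_path V E ([a, b, c, d] @ [x])"
    by (rule induced_path_snoc[OF G P])
      (use x_not_dominates \<open>x \<noteq> d\<close> \<open>E d x\<close> \<open>x \<in> V\<close> sym in \<open>auto simp: dominates_def\<close>)
  then show thesis using that by simp
qed

theorem proposition1:
  fixes V :: "'a set" and E :: "'a \<Rightarrow> 'a \<Rightarrow> bool" and a b c d :: 'a
  assumes "graph V E"
    and "P5_free V E"
    and "induced_path V E [a, b, c, d]"
    and "efficient_dominating_set V E D"
  shows "b \<notin> D \<and> c \<notin> D"
proof -
  have no_P5: "\<not> induced_path V E [u, v, w, y, z]" for u v w y z
    using assms(2) unfolding P5_free_def by force
  have "induced_path V E [d, c, b, a]"
    using induced_path_rev[OF assms(3)] by simp
  then show ?thesis
    using efficient_dominator_extends_P4[OF assms(1,4)] assms(3) no_P5 by metis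
qed

end
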